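(* Every cyclic and connected extended representation graph for $E$ is isomorphic to $(F_x,\phi_x)$ for some $x\in X^c$.
   Context: $E=(E^0,E^1,s,r)$ is a row-finite directed graph; for each vertex $v$ emitting an edge a fixed edge $e^v\in s^{-1}(v)$ is called special, others nonspecial. The double graph $E_d$ has vertices $E^0$ and edges $e$ (real) and $e^*$ (ghost) for $e\in E^1$, with $s_d(e)=s(e),r_d(e)=r(e),s_d(e^* )=r(e),r_d(e^* )=s(e)$. For a path $p=e_1\dots e_n$ set $p^*=e_n^*\dots e_1^*$. The set $X$ of basis paths consists of the paths in $E_d$: vertices; $p,p^*$ for paths $p$ of length $\ge1$ in $E$; $pq^*$ with $p=e_1\dots e_k,q=f_1\dots f_n$ of length $\ge1$ in $E$, $r(p)=r(q)$, and $e_k\ne f_n$ or $e_k=f_n$ nonspecial. $X^c$ is the set of closed paths of length $\ge1$ in $E_d$ consisting only of real edges or only of ghost edges. An extended representation graph for $E$ is a pair $(F,\phi)$, $F$ a directed graph, $\phi:F\to E_d$ a graph homomorphism, such that for every $w\in F^0$: (i) $w$ is a source or receives exactly one edge $f_w$; (ii) if $w$ is a source or $\phi(f_w)$ is a nonspecial real edge, $\phi$ maps $s^{-1}(w)$ bijectively onto $s_d^{-1}(\phi(w))$; (iii) if $\phi(f_w)$ is a special real edge, onto $s_d^{-1}(\phi(w))\setminus\{\phi(f_w)^*\}$; (iv) if $\phi(f_w)$ is a ghost edge, onto the ghost edges in $s_d^{-1}(\phi(w))$. An isomorphism $(F,\phi)\to(G,\psi)$ is a graph isomorphism $\alpha$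 with $\psi\circ\alpha=\phi$. $F$ is connected if any two vertices are joined by a path when edge directions are ignored; cyclic if it contains a cycle (closed path of length $\ge1$ whose edges have pairwise distinct sources). $(F_x,\phi_x)$ for $x=x_1\dots x_m\in X^c$: for $1\le i\le m$, $X_i$ = basis paths $y=y_1\dots y_n$, $n\ge1$, with $x_iy_1$ a basis path and $y_1\ne x_{i+1}$ ($x_{m+1}=x_1$). Vertices $w_i$ ($1\le i\le m$), $w_{i,y}$ ($y\in X_i$), all distinct; edges $f_i$ from $w_{i-1}$ to $w_i$ ($w_0=w_m$), and $f_{i,y}$ to $w_{i,y}$ from $w_i$ if $|y|=1$, from $w_{i,y_1\dots y_{n-1}}$ if $n\ge2$; $\phi_x(w_i)=r_d(x_i)$, $\phi_x(w_{i,y})=r_d(y)$, $\phi_x(f_i)=x_i$, $\phi_x(f_{i,y})=$ last edge of $y$. *)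

theory Defs
  imports Main
begin

record ('v, 'e) dgraph =
  verts :: "'v set"
  arcs  :: "'e set"
  src   :: "'e \<Rightarrow> 'v"
  tgt   :: "'e \<Rightarrow> 'v"

definition is_dgraph :: "('v, 'e) dgraph \<Rightarrow> bool" where
  "is_dgraph G \<longleftrightarrow> (\<forall>e\<in>arcs G. src G e \<in> verts G \<and> tgt G e \<in> verts G)"

definition out_arcs :: "('v, 'e) dgraph \<Rightarrow> 'v \<Rightarrow> 'e set" where
  "out_arcs G v = {e \<in> arcs G. src G e = v}"

definition in_arcs :: "('v, 'e) dgraph \<Rightarrow> 'v \<Rightarrow> 'e set" where
  "in_arcs G v = {e \<in> arcs G. tgt G e = v}"

definition row_finite :: "('v, 'e) dgraph \<Rightarrow> bool" where
  "row_finite G \<longleftrightarrow> (\<forall>v\<in>verts G. finite (out_arcs G v))"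

definition undir_adj :: "('v, 'e) dgraph \<Rightarrow> 'v \<Rightarrow> 'v \<Rightarrow> bool" where
  "undir_adj G u v \<longleftrightarrow> (\<exists>e\<in>arcs G. (src G e = u \<and> tgt G e = v) \<or> (src G e = v \<and> tgt G e = u))"

definition connected_graph :: "('v, 'e) dgraph \<Rightarrow> bool" where
  "connected_graph G \<longleftrightarrow> (\<forall>u\<in>verts G. \<forall>v\<in>verts G. (undir_adj G)\<^sup>*\<^sup>* u v)"

definition is_path :: "('v, 'e) dgraph \<Rightarrow> 'e list \<Rightarrow> bool" where
  "is_path G p \<longleftrightarrow> p \<noteq> [] \<and> set p \<subseteq> arcs G \<and>
     (\<forall>i. Suc i < length p \<longrightarrow> tgt G (p ! i) = src G (p ! Suc i))"

definition is_closed_path :: "('v, 'e) dgraph \<Rightarrow> 'e list \<Rightarrow> bool" where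
  "is_closed_path G p \<longleftrightarrow> is_path G p \<and> tgt G (last p) = src G (hd p)"

definition cyclic_graph :: "('v, 'e) dgraph \<Rightarrow> bool" where
  "cyclic_graph G \<longleftrightarrow> (\<exists>p. is_closed_path G p \<and> distinct (map (src G) p))"

definition special_choice :: "('v, 'e) dgraph \<Rightarrow> ('v \<Rightarrow> 'e) \<Rightarrow> bool" where
  "special_choice E sp \<longleftrightarrow>
     (\<forall>v\<in>verts E. out_arcs E v \<noteq> {} \<longrightarrow> sp v \<in> out_arcs E v)"

definition special :: "('v, 'e) dgraph \<Rightarrow> ('v \<Rightarrow> 'e) \<Rightarrow> 'e \<Rightarrow> bool" where
  "special E sp e \<longleftrightarrow> e = sp (src E e)"

datatype 'e dedge = Real 'e | Ghost 'e

fun is_ghost :: "'e dedge \<Rightarrow> bool" where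
  "is_ghost (Real _) = False"
| "is_ghost (Ghost _) = True"

fun is_real :: "'e dedge \<Rightarrow> bool" where
  "is_real (Real _) = True"
| "is_real (Ghost _) = False"

fun dsrc :: "('v, 'e) dgraph \<Rightarrow> 'e dedge \<Rightarrow> 'v" where
  "dsrc E (Real e) = src E e"
| "dsrc E (Ghost e) = tgt E e"

fun dtgt :: "('v, 'e) dgraph \<Rightarrow> 'e dedge \<Rightarrow> 'v" where
  "dtgt E (Real e) = tgt E e"
| "dtgt E (Ghost e) = src E e"

definition double_graph :: "('v, 'e) dgraph \<Rightarrow> ('v, 'e dedge) dgraph" where
  "double_graph E = \<lparr>verts = verts E, arcs = Real ` arcs E \<union> Ghost ` arcs E,
                     src = dsrc E, tgt = dtgt E\<rparr>"

text \<open>Basis paths of length \<ge> 1 (the vertices, also basis paths, are not needed here):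
  p, q^*, p q^* with the turn condition.\<close>
definition basis_path :: "('v, 'e) dgraph \<Rightarrow> ('v \<Rightarrow> 'e) \<Rightarrow> 'e dedge list \<Rightarrow> bool" where
  "basis_path E sp y \<longleftrightarrow> is_path (double_graph E) y \<and>
     (\<exists>p q. y = map Real p @ map Ghost (rev q) \<and>
        (p \<noteq> [] \<and> q \<noteq> [] \<longrightarrow> (last p \<noteq> last q \<or> \<not> special E sp (last p))))"

definition Xc :: "('v, 'e) dgraph \<Rightarrow> 'e dedge list set" where
  "Xc E = {x. is_closed_path (double_graph E) x \<and>
              ((\<forall>d\<in>set x. is_real d) \<or> (\<forall>d\<in>set x. is_ghost d))}"

definition graph_hom :: "('w, 'f) dgraph \<Rightarrow> ('v, 'e) dgraph \<Rightarrow> ('w \<Rightarrow> 'v) \<Rightarrow> ('f \<Rightarrow> 'e) \<Rightarrow> bool" where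
  "graph_hom F G hv he \<longleftrightarrow> hv ` verts F \<subseteq> verts G \<and> he ` arcs F \<subseteq> arcs G \<and>
     (\<forall>f\<in>arcs F. src G (he f) = hv (src F f) \<and> tgt G (he f) = hv (tgt F f))"

definition ext_rep_graph ::
  "('v, 'e) dgraph \<Rightarrow> ('v \<Rightarrow> 'e) \<Rightarrow> ('w, 'f) dgraph \<Rightarrow> ('w \<Rightarrow> 'v) \<Rightarrow> ('f \<Rightarrow> 'e dedge) \<Rightarrow> bool" where
  "ext_rep_graph E sp F phv phe \<longleftrightarrow>
     is_dgraph F \<and> graph_hom F (double_graph E) phv phe \<and>
     (\<forall>w\<in>verts F.
        (in_arcs F w = {} \<and>
           bij_betw phe (out_arcs F w) (out_arcs (double_graph E) (phv w))) \<or>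
        (\<exists>fw. in_arcs F w = {fw} \<and>
           (case phe fw of
              Real e \<Rightarrow>
                (if special E sp e
                 then bij_betw phe (out_arcs F w) (out_arcs (double_graph E) (phv w) - {Ghost e})
                 else bij_betw phe (out_arcs F w) (out_arcs (double_graph E) (phv w)))
            | Ghost e \<Rightarrow>
                bij_betw phe (out_arcs F w) {d \<in> out_arcs (double_graph E) (phv w). is_ghost d})))"

definition rep_isomorphic ::
  "('w, 'f) dgraph \<Rightarrow> ('w \<Rightarrow> 'v) \<Rightarrow> ('f \<Rightarrow> 'd) \<Rightarrow>
   ('w2, 'f2) dgraph \<Rightarrow> ('w2 \<Rightarrow> 'v) \<Rightarrow> ('f2 \<Rightarrow> 'd) \<Rightarrow> bool" where
  "rep_isomorphic F phv phe G psv pse \<longleftrightarrow>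
     (\<exists>av ae. bij_betw av (verts F) (verts G) \<and> bij_betw ae (arcs F) (arcs G) \<and>
        (\<forall>f\<in>arcs F. src G (ae f) = av (src F f) \<and> tgt G (ae f) = av (tgt F f)) \<and>
        (\<forall>w\<in>verts F. psv (av w) = phv w) \<and>
        (\<forall>f\<in>arcs F. pse (ae f) = phe f))"

text \<open>Indices are 0-based: x_i = x ! i for i < m = length x; x_{i+1} is x ! ((i+1) mod m).
  Vertex w_i is Inl i, vertex w_{i,y} is Inr (i, y); edge f_i is Inl i, edge f_{i,y} is Inr (i, y).\<close>
definition Xi :: "('v, 'e) dgraph \<Rightarrow> ('v \<Rightarrow> 'e) \<Rightarrow> 'e dedge list \<Rightarrow> nat \<Rightarrow> 'e dedge list set" where
  "Xi E sp x i = {y. y \<noteq> [] \<and> basis_path E sp y \<and> basis_path E sp (x ! i # y) \<and>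
                    hd y \<noteq> x ! (Suc i mod length x)}"

definition Fx_index :: "('v, 'e) dgraph \<Rightarrow> ('v \<Rightarrow> 'e) \<Rightarrow> 'e dedge list \<Rightarrow>
                        (nat + nat \<times> 'e dedge list) set" where
  "Fx_index E sp x = Inl ` {..<length x} \<union> {Inr (i, y) | i y. i < length x \<and> y \<in> Xi E sp x i}"

fun Fx_src :: "'e dedge list \<Rightarrow> (nat + nat \<times> 'e dedge list) \<Rightarrow> (nat + nat \<times> 'e dedge list)" where
  "Fx_src x (Inl i) = Inl ((i + length x - 1) mod length x)"
| "Fx_src x (Inr (i, y)) = (if length y = 1 then Inl i else Inr (i, butlast y))"

definition Fx_graph :: "('v, 'e) dgraph \<Rightarrow> ('v \<Rightarrow> 'e) \<Rightarrow> 'e dedge list \<Rightarrow>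
     (nat + nat \<times> 'e dedge list, nat + nat \<times> 'e dedge list) dgraph" where
  "Fx_graph E sp x = \<lparr>verts = Fx_index E sp x, arcs = Fx_index E sp x,
                      src = Fx_src x, tgt = id\<rparr>"

fun Fx_phie :: "'e dedge list \<Rightarrow> (nat + nat \<times> 'e dedge list) \<Rightarrow> 'e dedge" where
  "Fx_phie x (Inl i) = x ! i"
| "Fx_phie x (Inr (i, y)) = last y"

definition Fx_phiv :: "('v, 'e) dgraph \<Rightarrow> 'e dedge list \<Rightarrow> (nat + nat \<times> 'e dedge list) \<Rightarrow> 'v" where
  "Fx_phiv E x w = dtgt E (Fx_phie x w)"

end

theory Submission
  imports Defs
begin

(* Let p be a cycle of F and x = phi(p) its label word. Every vertex of F receives at most one
   arc, and by (ii)-(iv) the labels of the arcs leaving a vertex entered by an arc labelled d are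
   exactly the edges d' for which d d' may occur inside a basis path. Hence every y in X_i can be
   traced uniquely in F starting from the target of the i-th arc of p, which maps F_x into F
   compatibly with sources, targets and labels. Two arcs with the same image have sources with
   the same image, because in-arcs are unique; so injectivity follows by induction on the length
   of y, down to the cycle, where the distinct sources of p decide. The image is closed under
   adjacency, so connectedness makes the map onto. Finally a ghost edge can only be followed by
   ghost edges, so going round the cycle shows that x is all real or all ghost, i.e. in X^c. *)

lemma is_path_iff_successively:
  "is_path G p \<longleftrightarrow> p \<noteq> [] \<and> set p \<subseteq> arcs G \<and> successively (\<lambda>e e'. tgt G e = src G e') p"
  unfolding is_path_def successively_conv_nth by blast

lemma closed_path_tgt_eq_src_next:
  assumes "is_closed_path G p" and "i < length p"
  shows "tgt G (p ! i) = src G (p ! (Suc i mod length p))"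
proof (cases "Suc i < length p")
  case True
  then show ?thesis
    using assms(1) by (simp add: is_closed_path_def is_path_def)
next
  case False
  with assms(2) have "Suc i = length p" by simp
  then have "i = length p - 1" "Suc i mod length p = 0" by simp_all
  with assms show ?thesis
    by (auto simp: is_closed_path_def is_path_def last_conv_nth hd_conv_nth)
qed

lemma graph_hom_closed_path:
  assumes hom: "graph_hom F G hv he" and p: "is_closed_path F p"
  shows "is_closed_path G (map he p)"
proof -
  have hom_src: "src G (he f) = hv (src F f)" and hom_tgt: "tgt G (he f) = hv (tgt F f)"
    if "f \<in> arcs F" for f
    using hom that by (auto simp: graph_hom_def)
  have arcs: "set p \<subseteq> arcs F" and adj: "successively (\<lambda>e e'. tgt F e = src F e') p"
    and ne: "p \<noteq> []" and cl: "tgt F (last p) = src F (hd p)"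
    using p by (auto simp: is_closed_path_def is_path_iff_successively)
  have "successively (\<lambda>e e'. tgt G (he e) = src G (he e')) p"
    using adj by (rule successively_mono) (use arcs in \<open>auto simp: hom_src hom_tgt subsetD\<close>)
  moreover have "tgt G (he (last p)) = src G (he (hd p))"
    using arcs ne cl by (simp add: hom_src hom_tgt subsetD)
  moreover have "set (map he p) \<subseteq> arcs G"
    using hom arcs unfolding graph_hom_def by (metis image_mono order_trans set_map)
  ultimately show ?thesis
    using ne by (simp add: is_closed_path_def is_path_iff_successively successively_map last_map hd_map)
qed

lemma Suc_mod_pred: "j < m \<Longrightarrow> Suc ((j + m - 1) mod m) mod m = j"
  by (cases j) (auto simp: mod_Suc)

lemma cyclic_list_all:
  assumes j: "j < length xs" and "P (xs ! j)"
    and step: "\<And>i. i < length xs \<Longrightarrow> P (xs ! i) \<Longrightarrow> P (xs ! (Suc i mod length xs))"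
  shows "\<forall>d\<in>set xs. P d"
proof -
  have "length xs > 0" using j by linarith
  have shifted: "P (xs ! ((j + k) mod length xs))" for k
  proof (induction k)
    case 0
    show ?case using j \<open>P (xs ! j)\<close> by simp
  next
    case (Suc k)
    then show ?case
      using step[of "(j + k) mod length xs"] \<open>length xs > 0\<close> by (simp add: mod_Suc_eq)
  qed
  have "P (xs ! l)" if "l < length xs" for l
    using shifted[of "length xs - j + l"] j that by simp
  then show ?thesis by (auto simp: in_set_conv_nth)
qed

lemma rep_isomorphicI_inverse:
  assumes bv: "bij_betw bv (verts G) (verts F)" and be: "bij_betw be (arcs G) (arcs F)"
    and src: "\<And>a. a \<in> arcs G \<Longrightarrow> src F (be a) = bv (src G a)"
    and tgt: "\<And>a. a \<in> arcs G \<Longrightarrow> tgt F (be a) = bv (tgt G a)"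
    and phv: "\<And>a. a \<in> verts G \<Longrightarrow> phv (bv a) = psv a"
    and phe: "\<And>a. a \<in> arcs G \<Longrightarrow> phe (be a) = pse a"
    and G: "is_dgraph G"
  shows "rep_isomorphic F phv phe G psv pse"
proof -
  let ?av = "the_inv_into (verts G) bv" and ?ae = "the_inv_into (arcs G) be"
  have bij: "bij_betw ?av (verts F) (verts G)" "bij_betw ?ae (arcs F) (arcs G)"
    using bv be by (simp_all add: bij_betw_the_inv_into)
  have arc: "src G (?ae f) = ?av (src F f) \<and> tgt G (?ae f) = ?av (tgt F f) \<and> pse (?ae f) = phe f"
    if "f \<in> arcs F" for f
  proof -
    from that obtain a where a: "a \<in> arcs G" "f = be a"
      using be by (auto simp: bij_betw_def)
    then have "?ae f = a"
      using be by (simp add: bij_betw_def the_inv_into_f_f)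
    moreover have "src G a \<in> verts G" "tgt G a \<in> verts G"
      using G a by (auto simp: is_dgraph_def)
    ultimately show ?thesis
      using a bv src tgt phe by (simp add: bij_betw_def the_inv_into_f_f)
  qed
  have vert: "psv (?av w) = phv w" if "w \<in> verts F" for w
  proof -
    from that obtain a where "a \<in> verts G" "w = bv a"
      using bv by (auto simp: bij_betw_def)
    then show ?thesis
      using bv phv by (simp add: bij_betw_def the_inv_into_f_f)
  qed
  show ?thesis
    unfolding rep_isomorphic_def using bij arc vert by blast
qed

section \<open>Basis paths\<close>

fun admissible_turn :: "('v, 'e) dgraph \<Rightarrow> ('v \<Rightarrow> 'e) \<Rightarrow> 'e dedge \<Rightarrow> 'e dedge \<Rightarrow> bool" where
  "admissible_turn E sp (Real e) d \<longleftrightarrow> \<not> (special E sp e \<and> d = Ghost e)"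
| "admissible_turn E sp (Ghost e) d \<longleftrightarrow> is_ghost d"

lemma successively_admissible_turn_iff:
  "successively (admissible_turn E sp) y \<longleftrightarrow>
     (\<exists>p q. y = map Real p @ map Ghost (rev q) \<and>
        (p \<noteq> [] \<and> q \<noteq> [] \<longrightarrow> last p \<noteq> last q \<or> \<not> special E sp (last p)))"
  (is "_ \<longleftrightarrow> (\<exists>p q. ?shape y p q)")
proof
  show "\<exists>p q. ?shape y p q" if "successively (admissible_turn E sp) y"
    using that
  proof (induction y)
    case Nil
    show ?case by auto
  next
    case (Cons d y)
    then obtain p q where y: "?shape y p q"
      by (auto simp: successively_Cons)
    show ?case
    proof (cases d)
      case (Real e)
      have "?shape (d # y) (e # p) q"
      proof (cases "p = [] \<and> q \<noteq> []")
        case True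
        then have "hd y = Ghost (last q)"
          using y by (simp add: hd_map hd_rev)
        with Cons.prems Real True y show ?thesis
          by (auto simp: successively_Cons)
      qed (use y Real in auto)
      then show ?thesis by blast
    next
      case (Ghost e)
      have "p = []"
      proof (rule ccontr)
        assume "p \<noteq> []"
        then have "hd y = Real (hd p)" using y by (simp add: hd_map)
        with Cons.prems Ghost y \<open>p \<noteq> []\<close> show False
          by (auto simp: successively_Cons)
      qed
      with y Ghost have "?shape (d # y) [] (q @ [e])" by simp
      then show ?thesis by blast
    qed
  qed
next
  assume "\<exists>p q. ?shape y p q"
  then obtain p q where y: "?shape y p q" by blast
  have "successively (admissible_turn E sp) (map Real p)"
    and "successively (admissible_turn E sp) (map Ghost (rev q))"
    by (simp_all add: successively_map successively_conv_nth)
  moreover have "admissible_turn E sp (last (map Real p)) (hd (map Ghost (rev q)))"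
    if "p \<noteq> []" "q \<noteq> []"
    using y that by (auto simp: last_map hd_map hd_rev)
  ultimately show "successively (admissible_turn E sp) y"
    using y by (auto simp: successively_append_iff)
qed

lemma out_arcs_double_graph:
  "d \<in> out_arcs (double_graph E) v \<longleftrightarrow> d \<in> arcs (double_graph E) \<and> dsrc E d = v"
  by (simp add: out_arcs_def double_graph_def)

lemma basis_path_iff_successively:
  "basis_path E sp y \<longleftrightarrow> y \<noteq> [] \<and> set y \<subseteq> arcs (double_graph E) \<and>
     successively (\<lambda>d d'. dtgt E d = dsrc E d' \<and> admissible_turn E sp d d') y"
  unfolding basis_path_def is_path_iff_successively successively_admissible_turn_iff[symmetric]
  by (auto simp: double_graph_def successively_conv_nth)

lemma basis_path_single: "basis_path E sp [d] \<longleftrightarrow> d \<in> arcs (double_graph E)"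
  by (simp add: basis_path_iff_successively)

lemma basis_path_snoc:
  assumes "z \<noteq> []"
  shows "basis_path E sp (z @ [d]) \<longleftrightarrow>
    basis_path E sp z \<and> d \<in> out_arcs (double_graph E) (dtgt E (last z)) \<and> admissible_turn E sp (last z) d"
  using assms
  by (auto simp: basis_path_iff_successively successively_append_iff out_arcs_double_graph)

lemma Xi_single_iff:
  assumes "x ! i \<in> arcs (double_graph E)"
  shows "[d] \<in> Xi E sp x i \<longleftrightarrow> d \<in> out_arcs (double_graph E) (dtgt E (x ! i)) \<and>
    admissible_turn E sp (x ! i) d \<and> d \<noteq> x ! (Suc i mod length x)"
  using assms basis_path_snoc[of "[x ! i]" E sp d]
  by (auto simp: Xi_def basis_path_single out_arcs_double_graph)

lemma Xi_snoc_iff: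
  assumes "y \<noteq> []"
  shows "y @ [d] \<in> Xi E sp x i \<longleftrightarrow>
    y \<in> Xi E sp x i \<and> d \<in> out_arcs (double_graph E) (dtgt E (last y)) \<and> admissible_turn E sp (last y) d"
  using assms basis_path_snoc[OF assms, of E sp d] basis_path_snoc[of "x ! i # y" E sp d]
  by (auto simp: Xi_def)

section \<open>The graphs F_x\<close>

lemma Xi_nonempty: "y \<in> Xi E sp x i \<Longrightarrow> y \<noteq> []"
  by (simp add: Xi_def)

lemma Inl_in_Fx_index_iff [simp]: "Inl i \<in> Fx_index E sp x \<longleftrightarrow> i < length x"
  by (auto simp: Fx_index_def)

lemma Inr_in_Fx_index_iff [simp]:
  "Inr (i, y) \<in> Fx_index E sp x \<longleftrightarrow> i < length x \<and> y \<in> Xi E sp x i"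
  by (auto simp: Fx_index_def)

lemma Fx_index_cases [consumes 1, case_names Inl Inr]:
  assumes "a \<in> Fx_index E sp x"
  obtains i where "a = Inl i" "i < length x"
  | i y where "a = Inr (i, y)" "i < length x" "y \<in> Xi E sp x i"
  using assms by (auto simp: Fx_index_def)

lemma Fx_src_in_Fx_index:
  assumes "a \<in> Fx_index E sp x"
  shows "Fx_src x a \<in> Fx_index E sp x"
  using assms
proof (cases rule: Fx_index_cases)
  case (Inl i)
  then have "0 < length x" by linarith
  with Inl show ?thesis by simp
next
  case (Inr i y)
  show ?thesis
  proof (cases "length y = 1")
    case False
    have "y \<noteq> []"
      using Xi_nonempty[OF \<open>y \<in> Xi E sp x i\<close>] .
    with False have "butlast y \<noteq> []" "y = butlast y @ [last y]"
      by (cases y rule: rev_cases; simp)+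
    with Inr False Xi_snoc_iff[of "butlast y" "last y" E sp x i] show ?thesis
      by (metis Fx_src.simps(2) Inr_in_Fx_index_iff)
  qed (use Inr in simp)
qed

fun Fx_depth :: "nat + nat \<times> 'a list \<Rightarrow> nat" where
  "Fx_depth (Inl i) = 0"
| "Fx_depth (Inr (i, y)) = length y"

lemma Fx_depth_Fx_src_le: "Fx_depth (Fx_src x a) \<le> Fx_depth a"
  by (cases a rule: Fx_depth.cases) auto

lemma Fx_depth_Fx_src_less:
  assumes "a \<in> Fx_index E sp x" and "a \<notin> range Inl"
  shows "Fx_depth (Fx_src x a) < Fx_depth a"
  using assms by (cases rule: Fx_index_cases) (auto dest: Xi_nonempty)

lemma butlast_length_1: "length y = 1 \<Longrightarrow> butlast y = []"
  by (cases y) auto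

(* This is where the condition y_1 \<noteq> x_(i+1) in the definition of X_i is needed. *)
lemma Fx_src_Inl_neq_Fx_src_Inr:
  assumes i: "i < length x" and y: "y \<in> Xi E sp x j" and label: "x ! i = last y"
  shows "Fx_src x (Inl i) \<noteq> Fx_src x (Inr (j, y))"
proof
  assume "Fx_src x (Inl i) = Fx_src x (Inr (j, y))"
  then have "length y = 1" and j: "j = (i + length x - 1) mod length x"
    by (auto split: if_splits)
  then have "hd y = last y"
    by (cases y) auto
  moreover have "Suc j mod length x = i"
    using j Suc_mod_pred[OF i] by simp
  ultimately show False
    using y label by (simp add: Xi_def)
qed

lemma Fx_src_Fx_phie_inj:
  assumes a: "a \<in> Fx_index E sp x" and b: "b \<in> Fx_index E sp x"
    and src_eq: "Fx_src x a = Fx_src x b" and phie_eq: "Fx_phie x a = Fx_phie x b"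
  shows "a = b"
proof -
  from a b show ?thesis
  proof (cases rule: Fx_index_cases)
    case (Inl i)
    from b show ?thesis
    proof (cases rule: Fx_index_cases)
      case (Inl j)
      with \<open>a = Inl i\<close> \<open>i < length x\<close> src_eq show ?thesis
        using Suc_mod_pred[of i "length x"] Suc_mod_pred[of j "length x"] by auto
    next
      case (Inr j y)
      with \<open>a = Inl i\<close> \<open>i < length x\<close> src_eq phie_eq show ?thesis
        using Fx_src_Inl_neq_Fx_src_Inr[of i x y E sp j] by simp
    qed
  next
    case (Inr i y)
    from b show ?thesis
    proof (cases rule: Fx_index_cases)
      case (Inl j)
      with \<open>a = Inr (i, y)\<close> \<open>y \<in> Xi E sp x i\<close> src_eq phie_eq show ?thesis
        using Fx_src_Inl_neq_Fx_src_Inr[of j x y E sp i] by simp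
    next
      case (Inr j y')
      with \<open>a = Inr (i, y)\<close> src_eq have "i = j" "butlast y = butlast y'"
        by (auto split: if_splits simp: butlast_length_1)
      moreover have "y = butlast y @ [last y]" "y' = butlast y' @ [last y']"
        using Xi_nonempty[OF \<open>y \<in> Xi E sp x i\<close>] Xi_nonempty[OF \<open>y' \<in> Xi E sp x j\<close>]
        by simp_all
      ultimately show ?thesis
        using \<open>a = Inr (i, y)\<close> \<open>b = Inr (j, y')\<close> phie_eq by (metis Fx_phie.simps(2))
    qed
  qed
qed

section \<open>Extended representation graphs\<close>

locale ext_rep =
  fixes E :: "('v, 'e) dgraph" and sp :: "'v \<Rightarrow> 'e"
    and F :: "('w, 'f) dgraph" and phv :: "'w \<Rightarrow> 'v" and phe :: "'f \<Rightarrow> 'e dedge"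
  assumes ext_rep_graph: "ext_rep_graph E sp F phv phe"
begin

lemma tgt_in_verts: "f \<in> arcs F \<Longrightarrow> tgt F f \<in> verts F"
  using ext_rep_graph by (simp add: ext_rep_graph_def is_dgraph_def)

lemma graph_hom: "graph_hom F (double_graph E) phv phe"
  using ext_rep_graph by (simp add: ext_rep_graph_def)

lemma phv_tgt: "f \<in> arcs F \<Longrightarrow> phv (tgt F f) = dtgt E (phe f)"
  using graph_hom by (simp add: graph_hom_def double_graph_def)

lemma in_arcs_eq_singleton:
  assumes "f \<in> in_arcs F w"
  shows "in_arcs F w = {f}"
proof -
  have "w \<in> verts F"
    using assms tgt_in_verts by (auto simp: in_arcs_def)
  with ext_rep_graph have "in_arcs F w = {} \<or> (\<exists>f'. in_arcs F w = {f'})"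
    unfolding ext_rep_graph_def by blast
  with assms show ?thesis by auto
qed

lemma bij_betw_out_arcs:
  assumes w: "w \<in> verts F" and in_w: "in_arcs F w = {f}"
  shows "bij_betw phe (out_arcs F w)
    {d \<in> out_arcs (double_graph E) (phv w). admissible_turn E sp (phe f) d}"
proof -
  let ?out = "out_arcs (double_graph E) (phv w)"
  let ?cond = "\<lambda>f. case phe f of
      Real e \<Rightarrow> (if special E sp e then bij_betw phe (out_arcs F w) (?out - {Ghost e})
                else bij_betw phe (out_arcs F w) ?out)
    | Ghost e \<Rightarrow> bij_betw phe (out_arcs F w) {d \<in> ?out. is_ghost d}"
  from ext_rep_graph w have "in_arcs F w = {} \<or> (\<exists>f'. in_arcs F w = {f'} \<and> ?cond f')"
    unfolding ext_rep_graph_def by blast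
  with in_w have cond: "?cond f"
    by auto
  show ?thesis
  proof (cases "phe f")
    case (Real e)
    have "{d \<in> ?out. admissible_turn E sp (phe f) d} =
        (if special E sp e then ?out - {Ghost e} else ?out)"
      using Real by auto
    with cond Real show ?thesis by (simp split: if_splits)
  next
    case (Ghost e)
    with cond show ?thesis by simp
  qed
qed

definition arc_labelled :: "'w \<Rightarrow> 'e dedge \<Rightarrow> 'f" where
  "arc_labelled w = the_inv_into (out_arcs F w) phe"

lemma arc_labelled_phe:
  assumes "w \<in> verts F" "in_arcs F w = {f}" "g \<in> out_arcs F w"
  shows "arc_labelled w (phe g) = g"
  using bij_betw_out_arcs[OF assms(1,2)] assms(3)
  by (simp add: arc_labelled_def bij_betw_def the_inv_into_f_f)

lemma arc_labelled:
  assumes "w \<in> verts F" "in_arcs F w = {f}"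
    and "d \<in> out_arcs (double_graph E) (phv w)" "admissible_turn E sp (phe f) d"
  shows "arc_labelled w d \<in> out_arcs F w" "phe (arc_labelled w d) = d"
  using bij_betw_out_arcs[OF assms(1,2)] assms(3,4)
  by (auto simp: arc_labelled_def bij_betw_def the_inv_into_into f_the_inv_into_f)

definition walk :: "'w \<Rightarrow> 'e dedge list \<Rightarrow> 'w" where
  "walk = foldl (\<lambda>v d. tgt F (arc_labelled v d))"

lemma walk_Nil [simp]: "walk v [] = v"
  and walk_snoc [simp]: "walk v (y @ [d]) = tgt F (arc_labelled (walk v y) d)"
  by (simp_all add: walk_def)

end

section \<open>Embedding F_x along a cycle\<close>

locale ext_rep_cycle = ext_rep E sp F phv phe
  for E :: "('v, 'e) dgraph" and sp and F :: "('w, 'f) dgraph" and phv and phe +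
  fixes p :: "'f list"
  assumes closed_path: "is_closed_path F p"
    and distinct_sources: "distinct (map (src F) p)"
begin

definition cycle_word :: "'e dedge list" where
  "cycle_word = map phe p"

abbreviation Fx :: "(nat + nat \<times> 'e dedge list) set" where
  "Fx \<equiv> Fx_index E sp cycle_word"

fun embed_arc :: "nat + nat \<times> 'e dedge list \<Rightarrow> 'f" where
  "embed_arc (Inl i) = p ! i"
| "embed_arc (Inr (i, y)) = arc_labelled (walk (tgt F (p ! i)) (butlast y)) (last y)"

definition embed_vert :: "nat + nat \<times> 'e dedge list \<Rightarrow> 'w" where
  "embed_vert a = tgt F (embed_arc a)"

lemma length_cycle_word [simp]: "length cycle_word = length p"
  by (simp add: cycle_word_def)

lemma cycle_word_nth: "i < length p \<Longrightarrow> cycle_word ! i = phe (p ! i)"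
  by (simp add: cycle_word_def)

lemma cycle_length_pos: "0 < length p"
  using closed_path by (simp add: is_closed_path_def is_path_def)

lemma cycle_arc: "i < length p \<Longrightarrow> p ! i \<in> arcs F"
  using closed_path by (auto simp: is_closed_path_def is_path_def)

lemma cycle_word_in_arcs: "i < length p \<Longrightarrow> cycle_word ! i \<in> arcs (double_graph E)"
  using graph_hom cycle_arc cycle_word_nth by (auto simp: graph_hom_def)

lemma cycle_arc_next:
  assumes "i < length p"
  shows "p ! (Suc i mod length p) \<in> out_arcs F (tgt F (p ! i))"
proof -
  have "Suc i mod length p < length p"
    using assms by (intro mod_less_divisor) linarith
  then show ?thesis
    using closed_path_tgt_eq_src_next[OF closed_path assms] cycle_arc by (simp add: out_arcs_def)
qed

lemma in_arcs_cycle_vert: "i < length p \<Longrightarrow> in_arcs F (tgt F (p ! i)) = {p ! i}"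
  using in_arcs_eq_singleton cycle_arc by (simp add: in_arcs_def)

lemma cycle_vert_in_verts: "i < length p \<Longrightarrow> tgt F (p ! i) \<in> verts F"
  using tgt_in_verts cycle_arc by blast

lemma embed_vert_Inr: "y \<noteq> [] \<Longrightarrow> embed_vert (Inr (i, y)) = walk (tgt F (p ! i)) y"
  by (simp add: embed_vert_def flip: walk_snoc)

lemma embed_arc_Inr:
  assumes i: "i < length p" and y: "y \<in> Xi E sp cycle_word i"
  shows "embed_arc (Inr (i, y)) \<in> out_arcs F (embed_vert (Fx_src cycle_word (Inr (i, y))))
    \<and> phe (embed_arc (Inr (i, y))) = last y"
  using y
proof (induction y rule: rev_induct)
  case Nil
  then show ?case by (auto dest: Xi_nonempty)
next
  case (snoc d y)
  show ?case
  proof (cases "y = []")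
    case True
    from snoc.prems True cycle_word_in_arcs[OF i]
    have "d \<in> out_arcs (double_graph E) (dtgt E (cycle_word ! i))"
      and "admissible_turn E sp (cycle_word ! i) d"
      by (simp_all add: Xi_single_iff)
    then have "d \<in> out_arcs (double_graph E) (phv (tgt F (p ! i)))"
      and "admissible_turn E sp (phe (p ! i)) d"
      using phv_tgt[OF cycle_arc[OF i]] cycle_word_nth[OF i] by simp_all
    from arc_labelled[OF cycle_vert_in_verts[OF i] in_arcs_cycle_vert[OF i] this] True
    show ?thesis by (simp add: embed_vert_def)
  next
    case False
    with snoc.prems have y: "y \<in> Xi E sp cycle_word i"
      and d: "d \<in> out_arcs (double_graph E) (dtgt E (last y))" "admissible_turn E sp (last y) d"
      by (simp_all add: Xi_snoc_iff)
    let ?v = "embed_vert (Inr (i, y))"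
    from snoc.IH[OF y] have "embed_arc (Inr (i, y)) \<in> arcs F"
      and phe_last: "phe (embed_arc (Inr (i, y))) = last y"
      by (auto simp: out_arcs_def)
    then have "?v \<in> verts F" "in_arcs F ?v = {embed_arc (Inr (i, y))}"
      and "phv ?v = dtgt E (last y)"
      using tgt_in_verts in_arcs_eq_singleton phv_tgt by (auto simp: embed_vert_def in_arcs_def)
    from arc_labelled[OF this(1,2)] d phe_last \<open>phv ?v = _\<close>
    show ?thesis
      using False by (simp add: embed_vert_Inr)
  qed
qed

lemma embed_arc_out_arcs:
  assumes "a \<in> Fx"
  shows "embed_arc a \<in> out_arcs F (embed_vert (Fx_src cycle_word a))"
  using assms
proof (cases rule: Fx_index_cases)
  case (Inl i)
  let ?j = "(i + length p - 1) mod length p"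
  have "?j < length p" "Suc ?j mod length p = i"
    using cycle_length_pos Suc_mod_pred Inl by auto
  with cycle_arc_next[of ?j] Inl show ?thesis
    by (simp add: embed_vert_def)
qed (use embed_arc_Inr in auto)

lemma phe_embed_arc:
  assumes "a \<in> Fx"
  shows "phe (embed_arc a) = Fx_phie cycle_word a"
  using assms by (cases rule: Fx_index_cases) (use embed_arc_Inr cycle_word_nth in auto)

lemma embed_arc_in_arcs: "a \<in> Fx \<Longrightarrow> embed_arc a \<in> arcs F"
  using embed_arc_out_arcs by (simp add: out_arcs_def)

lemma src_embed_arc: "a \<in> Fx \<Longrightarrow> src F (embed_arc a) = embed_vert (Fx_src cycle_word a)"
  using embed_arc_out_arcs by (simp add: out_arcs_def)

lemma embed_vert_in_verts: "a \<in> Fx \<Longrightarrow> embed_vert a \<in> verts F"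
  using tgt_in_verts embed_arc_in_arcs by (simp add: embed_vert_def)

lemma in_arcs_embed_vert: "a \<in> Fx \<Longrightarrow> in_arcs F (embed_vert a) = {embed_arc a}"
  using in_arcs_eq_singleton embed_arc_in_arcs by (simp add: embed_vert_def in_arcs_def)

lemma phv_embed_vert: "a \<in> Fx \<Longrightarrow> phv (embed_vert a) = Fx_phiv E cycle_word a"
  using phv_tgt embed_arc_in_arcs phe_embed_arc by (simp add: embed_vert_def Fx_phiv_def)

lemma out_arc_embed_vert_label:
  assumes a: "a \<in> Fx" and g: "g \<in> out_arcs F (embed_vert a)"
  shows "phe g \<in> out_arcs (double_graph E) (Fx_phiv E cycle_word a)"
    and "admissible_turn E sp (Fx_phie cycle_word a) (phe g)"
    and "arc_labelled (embed_vert a) (phe g) = g"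
proof -
  have w: "embed_vert a \<in> verts F" "in_arcs F (embed_vert a) = {embed_arc a}"
    using a embed_vert_in_verts in_arcs_embed_vert by auto
  with g show "phe g \<in> out_arcs (double_graph E) (Fx_phiv E cycle_word a)"
    and "admissible_turn E sp (Fx_phie cycle_word a) (phe g)"
    using bij_betw_out_arcs[OF w] phe_embed_arc[OF a] phv_embed_vert[OF a]
    by (auto simp: bij_betw_def)
  show "arc_labelled (embed_vert a) (phe g) = g"
    using arc_labelled_phe[OF w g] .
qed

lemma out_arcs_embed_vert:
  assumes a: "a \<in> Fx" and g: "g \<in> out_arcs F (embed_vert a)"
  shows "g \<in> embed_arc ` Fx"
proof -
  let ?d = "phe g"
  note d = out_arc_embed_vert_label[OF a g]
  from a show ?thesis
  proof (cases rule: Fx_index_cases)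
    case (Inl i)
    show ?thesis
    proof (cases "?d = cycle_word ! (Suc i mod length p)")
      case True
      have "p ! (Suc i mod length p) \<in> out_arcs F (embed_vert a)"
        using cycle_arc_next Inl by (simp add: embed_vert_def)
      with True d(3) have "g = embed_arc (Inl (Suc i mod length p))"
        using out_arc_embed_vert_label(3)[OF a] cycle_word_nth[of "Suc i mod length p"] cycle_length_pos
        by (metis embed_arc.simps(1) mod_less_divisor)
      moreover have "Inl (Suc i mod length p) \<in> Fx"
        using cycle_length_pos by simp
      ultimately show ?thesis by blast
    next
      case False
      from cycle_word_in_arcs Inl have "[?d] \<in> Xi E sp cycle_word i"
        using d False Inl by (simp add: Xi_single_iff Fx_phiv_def)
      moreover have "embed_arc (Inr (i, [?d])) = g"
        using d(3) Inl by (simp add: embed_vert_def)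
      ultimately show ?thesis
        using Inl by (metis Inr_in_Fx_index_iff image_eqI length_cycle_word)
    qed
  next
    case (Inr i y)
    then have "y @ [?d] \<in> Xi E sp cycle_word i"
      using d by (simp add: Xi_snoc_iff[OF Xi_nonempty] Fx_phiv_def)
    moreover have "embed_arc (Inr (i, y @ [?d])) = g"
      using d(3) Inr by (simp add: embed_vert_Inr[OF Xi_nonempty])
    ultimately show ?thesis
      using Inr by (metis Inr_in_Fx_index_iff image_eqI length_cycle_word)
  qed
qed

lemma inj_on_embed_arc: "inj_on embed_arc Fx"
proof -
  have "a = b" if "a \<in> Fx" "b \<in> Fx" "embed_arc a = embed_arc b" for a b
    using that
  proof (induction "Fx_depth a + Fx_depth b" arbitrary: a b rule: less_induct)
    case less
    show ?case
    proof (cases "\<exists>i j. a = Inl i \<and> b = Inl j")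
      case True
      then obtain i j where "a = Inl i" "b = Inl j" by blast
      with less.prems distinct_sources show ?thesis
        by (auto simp: distinct_map nth_eq_iff_index_eq)
    next
      case False
      then consider "a \<notin> range Inl" | "b \<notin> range Inl" by blast
      then have "Fx_depth (Fx_src cycle_word a) + Fx_depth (Fx_src cycle_word b)
          < Fx_depth a + Fx_depth b"
        using Fx_depth_Fx_src_less[OF less.prems(1)] Fx_depth_Fx_src_less[OF less.prems(2)]
          Fx_depth_Fx_src_le[of cycle_word a] Fx_depth_Fx_src_le[of cycle_word b]
        by cases (simp_all add: add_less_le_mono add_le_less_mono)
      moreover have "embed_vert (Fx_src cycle_word a) = embed_vert (Fx_src cycle_word b)"
        using less.prems src_embed_arc by metis
      then have "embed_arc (Fx_src cycle_word a) = embed_arc (Fx_src cycle_word b)"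
        using in_arcs_embed_vert Fx_src_in_Fx_index less.prems by (metis singleton_inject)
      ultimately have "Fx_src cycle_word a = Fx_src cycle_word b"
        using less.hyps less.prems Fx_src_in_Fx_index by blast
      moreover have "Fx_phie cycle_word a = Fx_phie cycle_word b"
        using less.prems phe_embed_arc by metis
      ultimately show ?thesis
        using Fx_src_Fx_phie_inj less.prems by blast
    qed
  qed
  then show ?thesis by (rule inj_onI)
qed

lemma inj_on_embed_vert: "inj_on embed_vert Fx"
  using inj_on_embed_arc in_arcs_embed_vert by (metis inj_on_def singleton_inject)

lemma verts_subset_embed_vert:
  assumes "connected_graph F"
  shows "verts F \<subseteq> embed_vert ` Fx"
proof
  fix v assume "v \<in> verts F"
  have start: "Inl 0 \<in> Fx" "embed_vert (Inl 0) \<in> verts F"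
    using cycle_length_pos embed_vert_in_verts by auto
  with assms \<open>v \<in> verts F\<close> have "(undir_adj F)\<^sup>*\<^sup>* (embed_vert (Inl 0)) v"
    by (simp add: connected_graph_def)
  then show "v \<in> embed_vert ` Fx"
  proof (induction rule: rtranclp_induct)
    case base
    show ?case using start by blast
  next
    case (step v' v)
    then obtain a where a: "a \<in> Fx" "v' = embed_vert a" by blast
    from step.hyps(2) obtain g where g: "g \<in> arcs F"
      and "(src F g = v' \<and> tgt F g = v) \<or> (src F g = v \<and> tgt F g = v')"
      by (auto simp: undir_adj_def)
    then consider "g \<in> out_arcs F (embed_vert a)" "v = tgt F g"
      | "g \<in> in_arcs F (embed_vert a)" "v = src F g"
      using a by (auto simp: out_arcs_def in_arcs_def)
    then show ?case
    proof cases
      case 1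
      then show ?thesis
        using out_arcs_embed_vert[OF a(1)] by (auto simp: embed_vert_def)
    next
      case 2
      then show ?thesis
        using in_arcs_embed_vert[OF a(1)] src_embed_arc[OF a(1)] Fx_src_in_Fx_index[OF a(1)] by auto
    qed
  qed
qed

lemma arcs_subset_embed_arc:
  assumes "connected_graph F"
  shows "arcs F \<subseteq> embed_arc ` Fx"
proof
  fix g assume g: "g \<in> arcs F"
  then obtain a where "a \<in> Fx" "tgt F g = embed_vert a"
    using verts_subset_embed_vert[OF assms] tgt_in_verts by blast
  with g show "g \<in> embed_arc ` Fx"
    using in_arcs_embed_vert by (auto simp: in_arcs_def)
qed

lemma cycle_word_in_Xc: "cycle_word \<in> Xc E"
proof -
  have "is_closed_path (double_graph E) cycle_word"
    using graph_hom_closed_path[OF graph_hom closed_path] by (simp add: cycle_word_def)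
  moreover have "\<forall>d\<in>set cycle_word. is_ghost d" if "\<exists>d\<in>set cycle_word. is_ghost d"
  proof -
    from that obtain j where "j < length cycle_word" "is_ghost (cycle_word ! j)"
      by (auto simp: in_set_conv_nth)
    then show ?thesis
    proof (rule cyclic_list_all)
      fix i assume "i < length cycle_word" and "is_ghost (cycle_word ! i)"
      then have i: "i < length p" by simp
      have "phe (p ! (Suc i mod length p)) \<in> phe ` out_arcs F (tgt F (p ! i))"
        using cycle_arc_next[OF i] by blast
      then have "admissible_turn E sp (phe (p ! i)) (phe (p ! (Suc i mod length p)))"
        using bij_betw_out_arcs[OF cycle_vert_in_verts[OF i] in_arcs_cycle_vert[OF i]]
        by (simp add: bij_betw_def)
      with \<open>is_ghost (cycle_word ! i)\<close> i cycle_length_pos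
      show "is_ghost (cycle_word ! (Suc i mod length cycle_word))"
        by (cases "phe (p ! i)") (simp_all add: cycle_word_nth)
    qed
  qed
  moreover have "is_real d \<longleftrightarrow> \<not> is_ghost d" for d :: "'e dedge"
    by (cases d) simp_all
  ultimately show ?thesis
    by (auto simp: Xc_def)
qed

lemma rep_isomorphic_Fx_graph:
  assumes "connected_graph F"
  shows "rep_isomorphic F phv phe (Fx_graph E sp cycle_word) (Fx_phiv E cycle_word) (Fx_phie cycle_word)"
proof (rule rep_isomorphicI_inverse)
  show "bij_betw embed_vert (verts (Fx_graph E sp cycle_word)) (verts F)"
    using inj_on_embed_vert verts_subset_embed_vert[OF assms] embed_vert_in_verts
    by (auto simp: Fx_graph_def bij_betw_def)
  show "bij_betw embed_arc (arcs (Fx_graph E sp cycle_word)) (arcs F)"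
    using inj_on_embed_arc arcs_subset_embed_arc[OF assms] embed_arc_in_arcs
    by (auto simp: Fx_graph_def bij_betw_def)
  show "is_dgraph (Fx_graph E sp cycle_word)"
    by (simp add: Fx_graph_def is_dgraph_def Fx_src_in_Fx_index)
qed (simp_all add: Fx_graph_def src_embed_arc phv_embed_vert phe_embed_arc flip: embed_vert_def)

end

theorem proposition5p16:
  fixes E :: "('v, 'e) dgraph" and sp :: "'v \<Rightarrow> 'e"
    and F :: "('w, 'f) dgraph" and phv :: "'w \<Rightarrow> 'v" and phe :: "'f \<Rightarrow> 'e dedge"
  assumes "is_dgraph E" and "row_finite E" and "special_choice E sp"
    and "ext_rep_graph E sp F phv phe"
    and "cyclic_graph F" and "connected_graph F"
  shows "\<exists>x\<in>Xc E. rep_isomorphic F phv phe (Fx_graph E sp x) (Fx_phiv E x) (Fx_phie x)"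
proof -
  obtain p where "is_closed_path F p" and "distinct (map (src F) p)"
    using assms(5) unfolding cyclic_graph_def by blast
  then interpret ext_rep_cycle E sp F phv phe p
    using assms(4) by unfold_locales
  show ?thesis
    using cycle_word_in_Xc rep_isomorphic_Fx_graph[OF assms(6)] by blast
qed

end
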